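(* Let $A\in\mathbb{R}^{d\times n}$ (with $n>d$) have nonzero columns $a_1,\dots,a_n$. Let $x_0\in\mathbb{R}^n$ have support $S_0$ with $|S_0|=m_0$, and let $y_0=Ax_0$. Suppose that the Exact Recovery Condition fails for $S_0$. Suppose further that there is $x_1\in\mathbb{R}^n$ whose support $S_1$ satisfies $S_1\supseteq S_0$, $|S_1|=m_1>m_0$, and that the Exact Recovery Condition holds for $S_1$. Then Orthogonal Matching Pursuit applied to $y_0$ recovers $x_0$ within $m_1$ steps: after at most $m_1$ iterations the residual is zero and the coefficient vector produced by OMP (with entries outside the selected index set set to zero) equals $x_0$.
   Context: For $S\subset\{1,\dots,n\}$, let $A_S$ be the matrix of columns $a_i$, $i\in S$. The Exact Recovery Condition (ERC) holds for $S$ if $A_S$ has full column rank and $\max_{j\notin S}\|A_S^{+}a_j\|_1<1$, where $A_S^{+}$ is the Moore–Penrose pseudoinverse; it fails otherwise. Orthogonal Matching Pursuit (OMP) on a signal $y$: set $r_0=y$, $\Lambda_0=\emptyset$; at iteration $k\ge1$, if $r_{k-1}=0$ stop; otherwise choose $j_k\in\arg\max_j|a_j^Tr_{k-1}|$, set $\Lambda_k=\Lambda_{k-1}\cup\{j_k\}$, let $x^{(k)}$ be the least-squares coefficients minimizing $\|y-A_{\Lambda_k}z\|_2$ over $z$ (supported on $\Lambda_k$, zero elsewhere), and set $r_k=y-Ax^{(k)}$. *)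

theory Defs
  imports "HOL-Analysis.Analysis"
begin

text \<open>Vectors in R^n are \<open>real^'n\<close>, a d x n matrix is \<open>real^'n^'d\<close>;
  the column a_j is \<open>column j A\<close>. A vector "supported on S" is an element
  of real^'n vanishing outside S; then A_S z_S = A *v z.\<close>

definition supp :: "real^'n \<Rightarrow> 'n set" where
  "supp x = {i. x $ i \<noteq> 0}"

definition l1norm :: "real^'n \<Rightarrow> real" where
  "l1norm z = (\<Sum>i\<in>UNIV. \<bar>z $ i\<bar>)"

definition full_col_rank :: "real^'n^'d \<Rightarrow> 'n set \<Rightarrow> bool" where
  "full_col_rank A S \<longleftrightarrow> inj_on (\<lambda>i. column i A) S \<and> independent ((\<lambda>i. column i A) ` S)"

definition ls_set :: "real^'n^'d \<Rightarrow> 'n set \<Rightarrow> real^'d \<Rightarrow> (real^'n) set" where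
  "ls_set A S b = {z. (\<forall>i. i \<notin> S \<longrightarrow> z $ i = 0) \<and>
     (\<forall>w. (\<forall>i. i \<notin> S \<longrightarrow> w $ i = 0) \<longrightarrow> norm (b - A *v z) \<le> norm (b - A *v w))}"

text \<open>Moore--Penrose pseudoinverse of A_S applied to b: the least-squares
  solution of minimum Euclidean norm (embedded with zeros outside S).\<close>
definition pinv_apply :: "real^'n^'d \<Rightarrow> 'n set \<Rightarrow> real^'d \<Rightarrow> real^'n" where
  "pinv_apply A S b = (THE z. z \<in> ls_set A S b \<and> (\<forall>w\<in>ls_set A S b. norm z \<le> norm w))"

definition ERC :: "real^'n^'d \<Rightarrow> 'n set \<Rightarrow> bool" where
  "ERC A S \<longleftrightarrow> full_col_rank A S \<and>
     (\<forall>j. j \<notin> S \<longrightarrow> l1norm (pinv_apply A S (column j A)) < 1)"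

text \<open>Runs of OMP on signal y (arbitrary tie-breaking in the argmax):
  \<open>omp_run A y k \<Lambda> x\<close> means that after k iterations the selected index set is
  \<Lambda> and the coefficient vector is x (so the residual is y - A x).\<close>
inductive omp_run :: "real^'n^'d \<Rightarrow> real^'d \<Rightarrow> nat \<Rightarrow> 'n set \<Rightarrow> real^'n \<Rightarrow> bool"
  for A y where
  start: "omp_run A y 0 {} 0"
| step: "\<lbrakk> omp_run A y k \<Lambda> x; y - A *v x \<noteq> 0;
           \<forall>i. \<bar>column i A \<bullet> (y - A *v x)\<bar> \<le> \<bar>column j A \<bullet> (y - A *v x)\<bar> \<rbrakk>
         \<Longrightarrow> omp_run A y (Suc k) (insert j \<Lambda>) (pinv_apply A (insert j \<Lambda>) y)"

end

theory Submission
  imports Defs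
begin

(* Tropp's argument for the ERC, run on the larger set S = supp x1 instead of supp x0.
   While the residual r = A (x0 - x) is a nonzero combination of the columns indexed by S,
   every column a_j with j outside S satisfies
   |a_j . r| <= ||A_S^+ a_j||_1 * max_{i in S} |a_i . r| < max_{i in S} |a_i . r|,
   so the greedy choice lies in S; it is a new index because the least-squares residual is
   orthogonal to the columns already chosen. Thus OMP never leaves S, and as A_S has full
   column rank the residual vanishes only when x = x0. *)

lemma supp_subset_iff: "supp z \<subseteq> S \<longleftrightarrow> (\<forall>i. i \<notin> S \<longrightarrow> z $ i = 0)"
  by (auto simp: supp_def)

lemma supp_diff_subset: "supp u \<subseteq> S \<Longrightarrow> supp v \<subseteq> S \<Longrightarrow> supp (u - v) \<subseteq> S"
  by (auto simp: supp_subset_iff)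

lemma matrix_vector_mult_supported:
  assumes "supp u \<subseteq> S"
  shows "A *v u = (\<Sum>i\<in>S. u $ i *\<^sub>R column i A)"
proof -
  have "A *v u = (\<Sum>i\<in>UNIV. u $ i *\<^sub>R column i A)"
    by (simp add: matrix_mult_sum scalar_mult_eq_scaleR)
  also have "\<dots> = (\<Sum>i\<in>S. u $ i *\<^sub>R column i A)"
    by (rule sum.mono_neutral_right) (use assms in \<open>auto simp: supp_def\<close>)
  finally show ?thesis .
qed

lemma inner_matrix_vector_mult_supported:
  assumes "supp u \<subseteq> S"
  shows "(A *v u) \<bullet> v = (\<Sum>i\<in>S. u $ i * (column i A \<bullet> v))"
  by (simp add: matrix_vector_mult_supported[OF assms] inner_sum_left)

lemma matrix_vector_mult_eq_0_if_orthogonal_columns: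
  assumes "supp u \<subseteq> S" and "\<forall>i\<in>S. column i A \<bullet> (A *v u) = 0"
  shows "A *v u = 0"
  using inner_matrix_vector_mult_supported[OF assms(1), of A "A *v u"] assms(2) by simp

lemma full_col_rank_subset: "full_col_rank A S \<Longrightarrow> T \<subseteq> S \<Longrightarrow> full_col_rank A T"
  unfolding full_col_rank_def by (meson image_mono independent_mono inj_on_subset)

lemma full_col_rank_matrix_vector_mult_eq_0:
  assumes "full_col_rank A S" and "supp u \<subseteq> S" and "A *v u = 0"
  shows "u = 0"
proof -
  let ?col = "\<lambda>i. column i A"
  have inj: "inj_on ?col S" and indep: "independent (?col ` S)"
    using assms(1) by (auto simp: full_col_rank_def)
  define g where "g v = u $ the_inv_into S ?col v" for v
  have "(\<Sum>v\<in>?col ` S. g v *\<^sub>R v) = (\<Sum>i\<in>S. u $ i *\<^sub>R column i A)"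
    by (simp add: sum.reindex[OF inj] g_def the_inv_into_f_f[OF inj])
  also have "\<dots> = 0"
    using matrix_vector_mult_supported[OF assms(2), of A] assms(3) by simp
  finally have "\<forall>v\<in>?col ` S. g v = 0"
    using indep dependent_finite[of "?col ` S"] by auto
  then have "\<forall>i\<in>S. u $ i = 0"
    by (auto simp: g_def the_inv_into_f_f[OF inj])
  with assms(2) show ?thesis
    by (auto simp: supp_def vec_eq_iff)
qed

lemma residual_Pythagorean:
  assumes "\<forall>i\<in>S. column i A \<bullet> (b - A *v z) = 0" and "supp (z - w) \<subseteq> S"
  shows "(norm (b - A *v w))\<^sup>2 = (norm (b - A *v z))\<^sup>2 + (norm (A *v (z - w)))\<^sup>2"
proof -
  have "orthogonal (b - A *v z) (A *v (z - w))"
    using inner_matrix_vector_mult_supported[OF assms(2), of A "b - A *v z"] assms(1)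
    by (simp add: orthogonal_def inner_commute)
  moreover have "b - A *v w = (b - A *v z) + A *v (z - w)"
    by (simp add: matrix_vector_mult_diff_distrib)
  ultimately show ?thesis
    by (metis norm_add_Pythagorean)
qed

lemma span_columns_subset_range:
  fixes A :: "real^'n^'d"
  shows "span ((\<lambda>i. column i A) ` S) \<subseteq> (\<lambda>u. A *v u) ` {u. supp u \<subseteq> S}"
proof (rule span_minimal)
  show "(\<lambda>i. column i A) ` S \<subseteq> (\<lambda>u. A *v u) ` {u. supp u \<subseteq> S}"
  proof
    fix v assume "v \<in> (\<lambda>i. column i A) ` S"
    then obtain i where "i \<in> S" "v = A *v axis i 1"
      by (auto simp: matrix_vector_mult_basis)
    moreover have "supp (axis i (1::real)) \<subseteq> S"
      using \<open>i \<in> S\<close> by (auto simp: supp_def axis_def)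
    ultimately show "v \<in> (\<lambda>u. A *v u) ` {u. supp u \<subseteq> S}" by blast
  qed
  have "subspace {u :: real^'n. supp u \<subseteq> S}"
    by (auto simp: subspace_def supp_subset_iff)
  then show "subspace ((\<lambda>u. A *v u) ` {u. supp u \<subseteq> S})"
    by (rule linear_subspace_image[OF matrix_vector_mul_linear])
qed

lemma normal_equations_solvable:
  fixes A :: "real^'n^'d"
  obtains z where "supp z \<subseteq> S" and "\<forall>i\<in>S. column i A \<bullet> (b - A *v z) = 0"
proof -
  let ?V = "(\<lambda>i. column i A) ` S"
  obtain p q where p: "p \<in> span ?V" and q: "\<And>w. w \<in> span ?V \<Longrightarrow> orthogonal q w"
    and b: "b = p + q"
    using orthogonal_subspace_decomp_exists[of ?V b] by blast
  obtain z where z: "supp z \<subseteq> S" "A *v z = p"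
    using p span_columns_subset_range by blast
  have "column i A \<bullet> (b - A *v z) = 0" if "i \<in> S" for i
    using q[of "column i A"] that z(2) b by (simp add: span_base orthogonal_def inner_commute)
  with z(1) show ?thesis using that by blast
qed

lemma ls_set_iff_normal_equations:
  "z \<in> ls_set A S b \<longleftrightarrow> supp z \<subseteq> S \<and> (\<forall>i\<in>S. column i A \<bullet> (b - A *v z) = 0)"
proof
  assume z: "z \<in> ls_set A S b"
  obtain z' where z': "supp z' \<subseteq> S" "\<forall>i\<in>S. column i A \<bullet> (b - A *v z') = 0"
    by (rule normal_equations_solvable)
  have supp_z: "supp z \<subseteq> S"
    using z by (auto simp: ls_set_def supp_def)
  have "norm (b - A *v z) \<le> norm (b - A *v z')"
    using z z'(1) by (auto simp: ls_set_def supp_def)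
  then have "(norm (b - A *v z))\<^sup>2 \<le> (norm (b - A *v z'))\<^sup>2"
    by (simp add: power_mono)
  moreover have "supp (z' - z) \<subseteq> S"
    using z'(1) supp_z by (rule supp_diff_subset)
  ultimately have "(norm (A *v (z' - z)))\<^sup>2 \<le> 0"
    using residual_Pythagorean[OF z'(2)] by simp
  then have "A *v (z' - z) = 0"
    by simp
  then have "b - A *v z = b - A *v z'"
    by (simp add: matrix_vector_mult_diff_distrib)
  with supp_z z'(2) show "supp z \<subseteq> S \<and> (\<forall>i\<in>S. column i A \<bullet> (b - A *v z) = 0)"
    by simp
next
  assume z: "supp z \<subseteq> S \<and> (\<forall>i\<in>S. column i A \<bullet> (b - A *v z) = 0)"
  have "norm (b - A *v z) \<le> norm (b - A *v w)" if "supp w \<subseteq> S" for w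
  proof -
    have "supp (z - w) \<subseteq> S"
      using z that by (simp add: supp_diff_subset)
    then have "(norm (b - A *v z))\<^sup>2 \<le> (norm (b - A *v w))\<^sup>2"
      using residual_Pythagorean[of S A b z w] z by simp
    then show ?thesis
      by (rule power2_le_imp_le) simp
  qed
  with z show "z \<in> ls_set A S b"
    by (auto simp: ls_set_def supp_def)
qed

lemma ls_set_unique:
  assumes "full_col_rank A S" and "z \<in> ls_set A S b" and "w \<in> ls_set A S b"
  shows "z = w"
proof -
  have supp: "supp (z - w) \<subseteq> S"
    using assms(2,3) by (simp add: ls_set_iff_normal_equations supp_diff_subset)
  have "A *v (z - w) = (b - A *v w) - (b - A *v z)"
    by (simp add: matrix_vector_mult_diff_distrib)
  then have "\<forall>i\<in>S. column i A \<bullet> (A *v (z - w)) = 0"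
    using assms(2,3) by (simp add: ls_set_iff_normal_equations inner_diff_right)
  then have "A *v (z - w) = 0"
    by (rule matrix_vector_mult_eq_0_if_orthogonal_columns[OF supp])
  then show ?thesis
    using full_col_rank_matrix_vector_mult_eq_0[OF assms(1) supp] by simp
qed

lemma pinv_apply_normal_equations:
  assumes "full_col_rank A S"
  shows "supp (pinv_apply A S b) \<subseteq> S"
    and "\<forall>i\<in>S. column i A \<bullet> (b - A *v pinv_apply A S b) = 0"
proof -
  obtain z where "supp z \<subseteq> S" and "\<forall>i\<in>S. column i A \<bullet> (b - A *v z) = 0"
    by (rule normal_equations_solvable)
  then have z: "z \<in> ls_set A S b"
    by (simp add: ls_set_iff_normal_equations)
  have "pinv_apply A S b = z"
    unfolding pinv_apply_def
    by (rule the_equality) (use z ls_set_unique[OF assms] in auto)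
  with z show "supp (pinv_apply A S b) \<subseteq> S"
    and "\<forall>i\<in>S. column i A \<bullet> (b - A *v pinv_apply A S b) = 0"
    by (simp_all add: ls_set_iff_normal_equations)
qed

lemma greedy_correlation_nonzero:
  assumes "supp u \<subseteq> S" and "A *v u \<noteq> 0"
    and "\<forall>i. \<bar>column i A \<bullet> (A *v u)\<bar> \<le> \<bar>column j A \<bullet> (A *v u)\<bar>"
  shows "column j A \<bullet> (A *v u) \<noteq> 0"
  using assms matrix_vector_mult_eq_0_if_orthogonal_columns[OF assms(1)] by force

lemma ERC_greedy_index_in_support:
  assumes erc: "ERC A S" and supp: "supp u \<subseteq> S" and "A *v u \<noteq> 0"
    and greedy: "\<forall>i. \<bar>column i A \<bullet> (A *v u)\<bar> \<le> \<bar>column j A \<bullet> (A *v u)\<bar>"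
  shows "j \<in> S"
proof (rule ccontr)
  assume "j \<notin> S"
  let ?r = "A *v u"
  define c where "c = pinv_apply A S (column j A)"
  have l1: "l1norm c < 1"
    using erc \<open>j \<notin> S\<close> by (simp add: ERC_def c_def)
  have fcr: "full_col_rank A S"
    using erc by (simp add: ERC_def)
  \<comment> \<open>A c is the projection of a_j onto the span of the columns in S, which contains r\<close>
  have "(column j A - A *v c) \<bullet> ?r = 0"
    using inner_matrix_vector_mult_supported[OF supp, of A "column j A - A *v c"]
      pinv_apply_normal_equations(2)[OF fcr, of "column j A"]
    by (simp add: c_def inner_commute)
  then have "column j A \<bullet> ?r = (\<Sum>i\<in>UNIV. c $ i * (column i A \<bullet> ?r))"
    using inner_matrix_vector_mult_supported[of c UNIV A ?r] by (simp add: inner_diff_left)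
  then have "\<bar>column j A \<bullet> ?r\<bar> \<le> (\<Sum>i\<in>UNIV. \<bar>c $ i\<bar> * \<bar>column i A \<bullet> ?r\<bar>)"
    by (metis (no_types, lifting) abs_mult sum.cong sum_abs)
  also have "\<dots> \<le> (\<Sum>i\<in>UNIV. \<bar>c $ i\<bar> * \<bar>column j A \<bullet> ?r\<bar>)"
    by (rule sum_mono) (simp add: greedy mult_left_mono)
  also have "\<dots> = l1norm c * \<bar>column j A \<bullet> ?r\<bar>"
    by (simp add: l1norm_def sum_distrib_right)
  finally have "(1 - l1norm c) * \<bar>column j A \<bullet> ?r\<bar> \<le> 0"
    by (simp add: algebra_simps)
  with l1 have "column j A \<bullet> ?r = 0"
    by (simp add: mult_le_0_iff)
  with greedy_correlation_nonzero assms(2-4) show False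
    by blast
qed

lemma omp_run_ERC_invariant:
  assumes erc: "ERC A S" and supp: "supp x0 \<subseteq> S"
    and "omp_run A (A *v x0) k \<Lambda> x"
  shows "\<Lambda> \<subseteq> S \<and> card \<Lambda> = k \<and> supp x \<subseteq> \<Lambda> \<and>
    (\<forall>i\<in>\<Lambda>. column i A \<bullet> (A *v x0 - A *v x) = 0)"
  using assms(3)
proof (induction rule: omp_run.induct)
  case start
  then show ?case
    by (simp add: supp_def)
next
  case (step k \<Lambda> x j)
  let ?r = "A *v x0 - A *v x"
  have residual: "?r = A *v (x0 - x)"
    by (simp add: matrix_vector_mult_diff_distrib)
  have supp_diff: "supp (x0 - x) \<subseteq> S"
    using step.IH supp by (meson order_trans supp_diff_subset)
  have "j \<in> S"
    using ERC_greedy_index_in_support[OF erc supp_diff, folded residual] step.hyps(2,3) .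
  moreover have "j \<notin> \<Lambda>"
    using greedy_correlation_nonzero[OF supp_diff, of A, folded residual] step.hyps(2,3) step.IH
    by blast
  moreover have "full_col_rank A (insert j \<Lambda>)"
    using erc step.IH \<open>j \<in> S\<close> by (auto simp: ERC_def intro: full_col_rank_subset)
  ultimately show ?case
    using step.IH pinv_apply_normal_equations[of A "insert j \<Lambda>" "A *v x0"]
    by (simp add: card_insert_if)
qed

theorem omp_recovers_if_ERC_on_superset:
  assumes "ERC A S" and "supp x0 \<subseteq> S" and "omp_run A (A *v x0) k \<Lambda> x"
  shows "k \<le> card S"
    and "A *v x0 - A *v x \<noteq> 0 \<Longrightarrow> k < card S"
    and "A *v x0 - A *v x = 0 \<Longrightarrow> x = x0"
proof -
  note inv = omp_run_ERC_invariant[OF assms]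
  have fcr: "full_col_rank A S"
    using assms(1) by (simp add: ERC_def)
  have supp_diff: "supp (x0 - x) \<subseteq> S"
    using inv assms(2) by (meson order_trans supp_diff_subset)
  have residual: "A *v x0 - A *v x = A *v (x0 - x)"
    by (simp add: matrix_vector_mult_diff_distrib)
  show "k \<le> card S"
    using inv by (auto intro: card_mono)
  show "k < card S" if nonzero: "A *v x0 - A *v x \<noteq> 0"
  proof -
    obtain i where "i \<in> S" and "column i A \<bullet> (A *v x0 - A *v x) \<noteq> 0"
      using matrix_vector_mult_eq_0_if_orthogonal_columns[OF supp_diff, of A, folded residual] nonzero
      by blast
    then have "\<Lambda> \<subset> S"
      using inv by blast
    then show ?thesis
      using inv by (auto intro: psubset_card_mono)
  qed
  show "x = x0" if "A *v x0 - A *v x = 0"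
    using full_col_rank_matrix_vector_mult_eq_0[OF fcr supp_diff] that residual by simp
qed

theorem theorem10:
  fixes A :: "real^'n^'d" and x0 x1 :: "real^'n" and m0 m1 :: nat
  assumes "CARD('n) > CARD('d)"
    and "\<forall>i. column i A \<noteq> 0"
    and "card (supp x0) = m0"
    and "\<not> ERC A (supp x0)"
    and "supp x0 \<subseteq> supp x1" and "card (supp x1) = m1" and "m1 > m0"
    and "ERC A (supp x1)"
  shows "\<forall>k \<Lambda> x. omp_run A (A *v x0) k \<Lambda> x \<longrightarrow>
           k \<le> m1 \<and> (A *v x0 - A *v x \<noteq> 0 \<longrightarrow> k < m1) \<and>
           (A *v x0 - A *v x = 0 \<longrightarrow> x = x0)"
  using omp_recovers_if_ERC_on_superset[OF assms(8,5)] assms(6) by blast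

end
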